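(* Let $m$ and $n_0$ be positive integers and $N=mn_0+m$. For $1\le\ell\le m$ let $R_\ell=\{m+(\ell-1)n_0+1,\dots,m+\ell n_0\}$. For $1\le j\le m$ and $1\le i_1<\cdots<i_j\le m$ let $X_{i_1,\dots,i_j}=\{Z\subseteq[N]:\ \{i_1,\dots,i_j\}\cup R_1\cup\cdots\cup R_{j-1}\subseteq Z\subseteq \{i_1,\dots,i_j\}\cup R_1\cup\cdots\cup R_j\}$. For any coloring $c$ of $\mathcal{B}_N$, if $\mathcal{B}_N$ contains no rainbow induced copy of $\mathcal{B}_m$, then there exist $j$ and $1\le i_1<\cdots<i_j\le m$ such that the restriction of $c$ to $X_{i_1,\dots,i_j}$ uses at most $2^m-1$ colors.
   Context: $\mathcal{B}_N$ is the Boolean lattice of subsets of $[N]$ under inclusion. A coloring assigns a color to each set (any number of colors allowed). An induced copy of a poset $\mathcal{P}$ in $\mathcal{B}_N$ is the image of an injection $f$ with $f(X)\subseteq f(Y)$ iff $X\le Y$; it is rainbow if its sets have pairwise distinct colors. *)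

theory Defs
  imports Main
begin

text \<open>The Boolean lattice B_N is Pow {1..N}, ordered by inclusion.\<close>

definition induced_copy_Bm :: "nat \<Rightarrow> nat \<Rightarrow> (nat set \<Rightarrow> nat set) \<Rightarrow> bool" where
  "induced_copy_Bm N m f \<longleftrightarrow>
     (\<forall>X\<in>Pow {1..m}. f X \<in> Pow {1..N}) \<and>
     inj_on f (Pow {1..m}) \<and>
     (\<forall>X\<in>Pow {1..m}. \<forall>Y\<in>Pow {1..m}. (f X \<subseteq> f Y \<longleftrightarrow> X \<subseteq> Y))"

definition rainbow :: "(nat set \<Rightarrow> 'c) \<Rightarrow> nat set set \<Rightarrow> bool" where
  "rainbow c S \<longleftrightarrow> inj_on c S"

definition has_rainbow_Bm :: "nat \<Rightarrow> nat \<Rightarrow> (nat set \<Rightarrow> 'c) \<Rightarrow> bool" where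
  "has_rainbow_Bm N m c \<longleftrightarrow>
     (\<exists>f. induced_copy_Bm N m f \<and> rainbow c (f ` Pow {1..m}))"

definition Rblk :: "nat \<Rightarrow> nat \<Rightarrow> nat \<Rightarrow> nat set" where
  "Rblk m n0 l = {m + (l - 1) * n0 + 1 .. m + l * n0}"

text \<open>X for index set I = {i_1 < ... < i_j}, with j = card I.\<close>
definition Xset :: "nat \<Rightarrow> nat \<Rightarrow> nat set \<Rightarrow> nat set set" where
  "Xset m n0 I = {Z. I \<union> (\<Union>l\<in>{1..<card I}. Rblk m n0 l) \<subseteq> Z \<and>
                     Z \<subseteq> I \<union> (\<Union>l\<in>{1..card I}. Rblk m n0 l)}"

end

theory Submission
  imports Defs
begin

text \<open>Suppose every X_I with I nonempty shows at least 2^m colours. Discarding the colour of the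
empty set, each of the 2^m - 1 families X_I still has at least 2^m - 1 colours, so sets
f(I) \<in> X_I with pairwise distinct colours, all different from that of the empty set, can be
picked greedily. Setting f({}) = {}, the map f is an induced copy of B_m: f(I) meets [m] exactly
in I, and for I \<subset> J every block that f(I) may use beyond I lies in R_1 \<union> ... \<union> R_{|J|-1},
which f(J) contains.\<close>

lemma rainbow_transversal_exists:
  assumes "finite K" and "\<forall>k\<in>K. card K \<le> card (c ` A k)"
  shows "\<exists>g. (\<forall>k\<in>K. g k \<in> A k) \<and> inj_on (c \<circ> g) K"
  using assms
proof (induction K rule: finite_induct)
  case empty
  then show ?case by simp
next
  case (insert k K)
  have many_colours: "card K < card (c ` A x)" if "x \<in> insert k K" for x
    using insert.prems insert.hyps that by fastforce
  then obtain g where g_in: "\<forall>x\<in>K. g x \<in> A x" and g_inj: "inj_on (c \<circ> g) K"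
    using insert.IH by fastforce
  have "card ((c \<circ> g) ` K) < card (c ` A k)"
    using card_image_le[OF insert.hyps(1), of "c \<circ> g"] many_colours[of k] by simp
  then have "\<not> c ` A k \<subseteq> (c \<circ> g) ` K"
    using card_mono[OF finite_imageI[OF insert.hyps(1)]] by fastforce
  then obtain a where a: "a \<in> A k" "c a \<notin> (c \<circ> g) ` K"
    by blast
  have "inj_on (c \<circ> g(k := a)) K"
    using g_inj insert.hyps(2) by (auto simp: inj_on_def)
  moreover have "(c \<circ> g(k := a)) ` K = (c \<circ> g) ` K"
    using insert.hyps(2) by auto
  ultimately have "inj_on (c \<circ> g(k := a)) (insert k K)"
    using a(2) insert.hyps(2) by simp
  moreover have "\<forall>x\<in>insert k K. (g(k := a)) x \<in> A x"
    using g_in a(1) by simp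
  ultimately show ?case
    by blast
qed

lemma induced_copy_BmI:
  assumes "\<And>X. X \<subseteq> {1..m} \<Longrightarrow> f X \<subseteq> {1..N}"
    and "\<And>X. X \<subseteq> {1..m} \<Longrightarrow> f X \<inter> {1..m} = X"
    and "\<And>X Y. X \<subseteq> Y \<Longrightarrow> Y \<subseteq> {1..m} \<Longrightarrow> f X \<subseteq> f Y"
  shows "induced_copy_Bm N m f"
proof -
  have "inj_on f (Pow {1..m})"
    by (rule inj_onI) (metis PowD assms(2))
  moreover have "f X \<subseteq> f Y \<longleftrightarrow> X \<subseteq> Y" if "X \<subseteq> {1..m}" "Y \<subseteq> {1..m}" for X Y
    using assms(2)[OF that(1)] assms(2)[OF that(2)] assms(3)[OF _ that(2)] by blast
  ultimately show ?thesis
    using assms(1) unfolding induced_copy_Bm_def by (intro conjI ballI) auto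
qed

lemma Rblk_subset: "1 \<le> l \<Longrightarrow> Rblk m n0 l \<subseteq> {m + 1..m + l * n0}"
  by (auto simp: Rblk_def)

lemma Xset_Int_atLeastAtMost:
  assumes "I \<subseteq> {1..m}" and "Z \<in> Xset m n0 I"
  shows "Z \<inter> {1..m} = I"
proof -
  have "(\<Union>l\<in>{1..card I}. Rblk m n0 l) \<inter> {1..m} = {}"
    using Rblk_subset by fastforce
  then show ?thesis
    using assms unfolding Xset_def by blast
qed

lemma Xset_subset_atLeastAtMost:
  assumes "I \<subseteq> {1..m}" and "Z \<in> Xset m n0 I"
  shows "Z \<subseteq> {1..m * n0 + m}"
proof -
  have "card I \<le> m"
    using card_mono[OF _ assms(1)] by simp
  have "Z \<subseteq> I \<union> (\<Union>l\<in>{1..card I}. Rblk m n0 l)"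
    using assms(2) by (simp add: Xset_def)
  also have "\<dots> \<subseteq> {1..m * n0 + m}"
  proof (intro Un_least UN_least)
    show "I \<subseteq> {1..m * n0 + m}"
      using assms(1) by auto
    fix l assume l: "l \<in> {1..card I}"
    have "{m + 1..m + l * n0} \<subseteq> {1..m * n0 + m}"
      using l \<open>card I \<le> m\<close> by (simp add: add.commute)
    then show "Rblk m n0 l \<subseteq> {1..m * n0 + m}"
      using order_trans[OF Rblk_subset] l by simp
  qed
  finally show ?thesis .
qed

lemma Xset_mono:
  assumes "I \<subset> J" and "finite J" and "Z \<in> Xset m n0 I" and "W \<in> Xset m n0 J"
  shows "Z \<subseteq> W"
proof -
  have "card I < card J"
    using psubset_card_mono[OF assms(2,1)] .
  have "Z \<subseteq> I \<union> (\<Union>l\<in>{1..card I}. Rblk m n0 l)"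
    using assms(3) by (simp add: Xset_def)
  also have "\<dots> \<subseteq> J \<union> (\<Union>l\<in>{1..<card J}. Rblk m n0 l)"
    using assms(1) \<open>card I < card J\<close> by (intro Un_mono UN_mono) auto
  also have "\<dots> \<subseteq> W"
    using assms(4) by (simp add: Xset_def)
  finally show ?thesis .
qed

lemma induced_copy_Bm_from_Xset:
  assumes f_empty: "f {} = {}"
    and f_in: "\<And>I. I \<subseteq> {1..m} \<Longrightarrow> I \<noteq> {} \<Longrightarrow> f I \<in> Xset m n0 I"
  shows "induced_copy_Bm (m * n0 + m) m f"
proof -
  have f_Int: "f I \<inter> {1..m} = I" if "I \<subseteq> {1..m}" for I
  proof (cases "I = {}")
    case False
    then show ?thesis
      by (rule Xset_Int_atLeastAtMost[OF that f_in[OF that]])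
  qed (simp add: f_empty)
  have f_range: "f I \<subseteq> {1..m * n0 + m}" if "I \<subseteq> {1..m}" for I
  proof (cases "I = {}")
    case False
    then show ?thesis
      by (rule Xset_subset_atLeastAtMost[OF that f_in[OF that]])
  qed (simp add: f_empty)
  have f_mono: "f I \<subseteq> f J" if "I \<subseteq> J" "J \<subseteq> {1..m}" for I J
  proof (cases "I = {} \<or> I = J")
    case False
    then have "I \<subset> J" "I \<subseteq> {1..m}" "I \<noteq> {}" "J \<noteq> {}"
      using that by auto
    then show ?thesis
      using Xset_mono[OF _ finite_subset[OF that(2)] f_in f_in[OF that(2)]] by simp
  qed (auto simp: f_empty)
  show ?thesis
    using f_range f_Int f_mono by (rule induced_copy_BmI)
qed

lemma has_rainbow_Bm_if_Xset_colourful: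
  assumes colourful: "\<And>I. I \<subseteq> {1..m} \<Longrightarrow> I \<noteq> {} \<Longrightarrow> 2 ^ m \<le> card (c ` Xset m n0 I)"
  shows "has_rainbow_Bm (m * n0 + m) m c"
proof -
  define K where "K = Pow {1..m} - {{}}"
  define A where "A I = Xset m n0 I - c -` {c {}}" for I
  have card_K: "card K = 2 ^ m - 1"
    by (simp add: K_def card_Diff_singleton card_Pow)
  have "finite K"
    by (simp add: K_def)
  have many_colours: "card K \<le> card (c ` A I)" if "I \<in> K" for I
  proof -
    have "c ` A I = c ` Xset m n0 I - {c {}}"
      by (auto simp: A_def)
    then have "card (c ` Xset m n0 I) - 1 \<le> card (c ` A I)"
      by (metis card_Diff_singleton_if diff_le_self order_refl)
    then show ?thesis
      using colourful[of I] that card_K by (simp add: K_def)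
  qed
  then obtain g where g_in: "\<forall>I\<in>K. g I \<in> A I" and g_inj: "inj_on (c \<circ> g) K"
    using rainbow_transversal_exists[OF \<open>finite K\<close>] many_colours by blast
  define f where "f = g({} := {})"
  have f_in: "f I \<in> Xset m n0 I"
    if "I \<subseteq> {1..m}" "I \<noteq> {}" for I
    using g_in that by (auto simp: f_def K_def A_def)
  have f_empty: "f {} = {}"
    by (simp add: f_def)
  have "induced_copy_Bm (m * n0 + m) m f"
    using f_empty f_in by (rule induced_copy_Bm_from_Xset)
  moreover have "inj_on (c \<circ> f) (Pow {1..m})"
  proof -
    have f_eq_g: "f I = g I" if "I \<in> K" for I
      using that by (simp add: f_def K_def)
    then have "inj_on (c \<circ> f) K"
      using g_inj by (auto simp: inj_on_def)
    moreover have "(c \<circ> f) ` K = (c \<circ> g) ` K"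
      using f_eq_g by auto
    moreover have "c {} \<notin> (c \<circ> g) ` K"
      using g_in by (auto simp: A_def)
    moreover have "Pow {1..m} = insert {} K" and "K - {{}} = K"
      by (auto simp: K_def)
    ultimately show ?thesis
      using f_empty by simp
  qed
  ultimately show ?thesis
    unfolding has_rainbow_Bm_def rainbow_def by (blast intro: inj_on_imageI)
qed

theorem lemma4p1:
  fixes m n0 N :: nat and c :: "nat set \<Rightarrow> 'c"
  assumes "m \<ge> 1" and "n0 \<ge> 1" and "N = m * n0 + m"
    and "\<not> has_rainbow_Bm N m c"
  shows "\<exists>I. I \<subseteq> {1..m} \<and> 1 \<le> card I \<and>
             card (c ` Xset m n0 I) \<le> 2 ^ m - 1"
proof (rule ccontr)
  assume "\<not> ?thesis"
  then have "2 ^ m \<le> card (c ` Xset m n0 I)" if "I \<subseteq> {1..m}" "I \<noteq> {}" for I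
    using that finite_subset[OF that(1)] by (fastforce simp: Suc_le_eq card_gt_0_iff)
  then have "has_rainbow_Bm N m c"
    using has_rainbow_Bm_if_Xset_colourful assms(3) by blast
  with assms(4) show False ..
qed

end
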